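(* The poset $\mathcal{FP}^c$ of nonempty faces of the Voronoi cell $V^c_O$ of the origin for the lattice of integer cuts $L\subset K$ (with respect to $q$), ordered by inclusion, is isomorphic to the poset $\mathcal{CAC}$ of coherent acyclic orientations of cut subgraphs of $G$.
   Context: $G=(V,E)$ is a finite connected graph (parallel edges allowed); each edge gives oriented edges $e,\bar e$, $\mathbb E$ the set of oriented edges. Real $1$-cochains are $x:\mathbb E\to\mathbb R$ with $x_{\bar e}=-x_e$, with $\langle x,y\rangle=\sum_{e\in E}x_ey_e$ and $q(x)=\langle x,x\rangle$. For $f:V\to\mathbb R$, $d(f)(e)=f(u)-f(v)$ where $u$ is the head and $v$ the tail of $e$. $K=\{d(f): f:V\to\mathbb R\}$ and $L=\{d(f): f:V\to\mathbb Z\}$ (the lattice of integer cuts). $V^c_\lambda=\{x\in K: q(x-\lambda)\le q(x-\mu)\ \forall\mu\in L\}$. A subgraph $H'$ is a cut subgraph if there is a partition $V_1,\dots,V_s$ of $V$ such that $H'$ consists exactly of the edges joining different parts. An orientation of such $H'$ is coherent acyclic if for some such partition defining $H'$ every edge between $V_i$ and $V_j$, $i<j$, is oriented from $V_i$ to $V_j$. $\mathcal{CAC}$ is the set of coherent acyclic orientations of cut subgraphs (including the empty one, $s=1$), with $D_1\preceq D_2$ iff $D_2\subseteq D_1$ (i.e. the subgraph of $D_2$ is contained in that of $D_1$ and the orientations agree). *)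

theory Defs
  imports "HOL-Analysis.Analysis"
begin

text \<open>A finite graph (parallel edges and loops allowed) is given by a finite vertex type 'v,
  a finite edge type 'e and functions hed, tal assigning head and tail to each edge.
  Real 1-cochains are identified with their values on the chosen orientation e of each
  edge, i.e. with vectors in real^'e (x on the reversed edge is -x).\<close>

definition graph_connected :: "('e \<Rightarrow> 'v) \<Rightarrow> ('e \<Rightarrow> 'v) \<Rightarrow> bool" where
  "graph_connected hed tal \<longleftrightarrow>
     (\<forall>u v. (u, v) \<in> ({(hed e, tal e) | e. True} \<union> {(tal e, hed e) | e. True})\<^sup>*)"

definition qf :: "real^'e::finite \<Rightarrow> real" where
  "qf x = (\<Sum>e\<in>UNIV. (x $ e)^2)"

definition cobound :: "('e::finite \<Rightarrow> 'v) \<Rightarrow> ('e \<Rightarrow> 'v) \<Rightarrow> ('v \<Rightarrow> real) \<Rightarrow> real^'e" where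
  "cobound hed tal f = (\<chi> e. f (hed e) - f (tal e))"

definition cut_space :: "('e::finite \<Rightarrow> 'v) \<Rightarrow> ('e \<Rightarrow> 'v) \<Rightarrow> (real^'e) set" where
  "cut_space hed tal = {cobound hed tal f | f. True}"

definition integer_cuts :: "('e::finite \<Rightarrow> 'v) \<Rightarrow> ('e \<Rightarrow> 'v) \<Rightarrow> (real^'e) set" where
  "integer_cuts hed tal = {cobound hed tal (\<lambda>v. real_of_int (f v)) | f. True}"

definition voronoi_cell :: "('e::finite \<Rightarrow> 'v) \<Rightarrow> ('e \<Rightarrow> 'v) \<Rightarrow> real^'e \<Rightarrow> (real^'e) set" where
  "voronoi_cell hed tal lam =
     {x \<in> cut_space hed tal. \<forall>\<mu>\<in>integer_cuts hed tal. qf (x - lam) \<le> qf (x - \<mu>)}"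

text \<open>Oriented edges: (e, True) is e itself (from tail to head), (e, False) is its reverse.\<close>
definition oe_tail :: "('e \<Rightarrow> 'v) \<Rightarrow> ('e \<Rightarrow> 'v) \<Rightarrow> 'e \<times> bool \<Rightarrow> 'v" where
  "oe_tail hed tal oe = (if snd oe then tal (fst oe) else hed (fst oe))"

definition oe_head :: "('e \<Rightarrow> 'v) \<Rightarrow> ('e \<Rightarrow> 'v) \<Rightarrow> 'e \<times> bool \<Rightarrow> 'v" where
  "oe_head hed tal oe = (if snd oe then hed (fst oe) else tal (fst oe))"

text \<open>An orientation of a subgraph is a set of oriented edges.\<close>
definition coherent_acyclic :: "('e \<Rightarrow> 'v) \<Rightarrow> ('e \<Rightarrow> 'v) \<Rightarrow> ('e \<times> bool) set \<Rightarrow> bool" where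
  "coherent_acyclic hed tal D \<longleftrightarrow>
     (\<exists>P :: 'v set list. P \<noteq> [] \<and> (\<forall>i<length P. P ! i \<noteq> {}) \<and>
        (\<forall>i<length P. \<forall>j<length P. i \<noteq> j \<longrightarrow> P ! i \<inter> P ! j = {}) \<and>
        \<Union>(set P) = UNIV \<and>
        D = {oe. \<exists>i j. i < j \<and> j < length P \<and> oe_tail hed tal oe \<in> P ! i \<and> oe_head hed tal oe \<in> P ! j})"

definition CAC :: "('e \<Rightarrow> 'v) \<Rightarrow> ('e \<Rightarrow> 'v) \<Rightarrow> ('e \<times> bool) set set" where
  "CAC hed tal = {D. coherent_acyclic hed tal D}"

definition cac_le :: "('e \<times> bool) set \<Rightarrow> ('e \<times> bool) set \<Rightarrow> bool" where
  "cac_le D1 D2 \<longleftrightarrow> D2 \<subseteq> D1"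

definition nonempty_faces :: "(real^'e::finite) set \<Rightarrow> (real^'e) set set" where
  "nonempty_faces S = {F. F face_of S \<and> F \<noteq> {}}"

end

theory Submission imports Defs begin

text \<open>
  Let K be the cut space in the edge space, P the orthogonal projection onto K and
  cube = [-1/2,1/2]^E. The Voronoi cell of the origin for the lattice of integer cuts is
  the zonotope P(cube):
  \<^item> P(cube) lies in the cell because, for a lattice point mu with integer coordinates and
    y in the cube, 2 (mu . y) <= |mu|_1 <= mu . mu;
  \<^item> conversely every x in the cell satisfies 2 (d(g) . x) <= |d(g)|_1 for every coboundary
    d(g) (tested first on cuts of vertex sets, then by peeling off the levels of g), which
    says that no hyperplane with normal in K separates x from P(cube).
  The nonempty faces of P(cube) are P(cube_face (signs c)) for c in K, where signs c is the set
  of oriented edges on which c is positive, and inclusion of faces is reverse inclusion of sign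
  patterns. Finally the sign patterns of coboundaries d(g) are exactly the coherent acyclic
  orientations: the ordered level sets of g form the ordered partition.

  The main
  theorem combines these facts.
\<close>

lemma card_image_less_if_collapse:
  assumes "finite A" "x \<in> A" "y \<in> A" "x \<noteq> y" "h x = h y"
  shows "card (h ` A) < card A"
proof -
  have "\<not> inj_on h A" using assms(2-5) by (auto dest: inj_onD)
  then have "card (h ` A) \<noteq> card A" using eq_card_imp_inj_on[OF assms(1)] by blast
  then show ?thesis using card_image_le[OF assms(1), of h] by linarith
qed

lemma strict_sorted_nth_less_iff:
  fixes xs :: "'a::linorder list"
  assumes "sorted_wrt (<) xs" "i < length xs" "j < length xs"
  shows "xs ! i < xs ! j \<longleftrightarrow> i < j"
proof
  assume less: "xs ! i < xs ! j"
  show "i < j"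
  proof (rule ccontr)
    assume "\<not> i < j"
    then have "j < i \<or> j = i" by auto
    then show False using less sorted_wrt_nth_less[OF assms(1) _ assms(2), of j] by auto
  qed
next
  show "i < j \<Longrightarrow> xs ! i < xs ! j" using sorted_wrt_nth_less[OF assms(1) _ assms(3)] .
qed

lemma inclusion_reversing_inverse:
  assumes onto: "\<Phi> ` A = B"
    and reverse: "\<And>a1 a2. a1 \<in> A \<Longrightarrow> a2 \<in> A \<Longrightarrow> \<Phi> a1 \<subseteq> \<Phi> a2 \<longleftrightarrow> a2 \<subseteq> a1"
  shows "\<exists>\<phi>. bij_betw \<phi> B A \<and> (\<forall>b1\<in>B. \<forall>b2\<in>B. b1 \<subseteq> b2 \<longleftrightarrow> \<phi> b2 \<subseteq> \<phi> b1)"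
proof -
  have inj: "inj_on \<Phi> A" using reverse by (intro inj_onI) blast
  then have bij: "bij_betw \<Phi> A B" using onto by (simp add: bij_betw_def)
  define \<phi> where "\<phi> = the_inv_into A \<Phi>"
  have \<phi>: "\<phi> b \<in> A" "\<Phi> (\<phi> b) = b" if "b \<in> B" for b
    using that onto the_inv_into_into[OF inj] f_the_inv_into_f[OF inj] by (auto simp: \<phi>_def)
  have "b1 \<subseteq> b2 \<longleftrightarrow> \<phi> b2 \<subseteq> \<phi> b1" if "b1 \<in> B" "b2 \<in> B" for b1 b2
    using reverse[OF \<phi>(1)[OF that(1)] \<phi>(1)[OF that(2)]] \<phi>(2) that by simp
  then show ?thesis using bij_betw_the_inv_into[OF bij] unfolding \<phi>_def by blast
qed

definition levels :: "('v::finite \<Rightarrow> 'a::linorder) \<Rightarrow> 'v set list" where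
  "levels g = map (\<lambda>a. g -` {a}) (sorted_list_of_set (range g))"

lemma levels_member:
  assumes "i < length (levels g)"
  shows "v \<in> levels g ! i \<longleftrightarrow> g v = sorted_list_of_set (range g) ! i"
  using assms by (simp add: levels_def)

lemma level_index_ex: "\<exists>i < length (levels g). v \<in> levels g ! i"
proof -
  have "g v \<in> set (sorted_list_of_set (range g))" by simp
  then obtain i where "i < length (sorted_list_of_set (range g))"
    "sorted_list_of_set (range g) ! i = g v" by (metis in_set_conv_nth)
  then show ?thesis by (auto simp: levels_def)
qed

lemma levels_order:
  assumes "i < length (levels g)" "j < length (levels g)" "u \<in> levels g ! i" "v \<in> levels g ! j"
  shows "g u < g v \<longleftrightarrow> i < j"
proof -
  have ij: "i < length (sorted_list_of_set (range g))" "j < length (sorted_list_of_set (range g))"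
    using assms(1,2) by (simp_all add: levels_def)
  have "sorted_wrt (<) (sorted_list_of_set (range g))" by simp
  moreover have "g u = sorted_list_of_set (range g) ! i" "g v = sorted_list_of_set (range g) ! j"
    using levels_member assms by blast+
  ultimately show ?thesis using strict_sorted_nth_less_iff[OF _ ij] by simp
qed

lemma levels_not_Nil: "levels g \<noteq> []"
  by (simp add: levels_def)

lemma levels_cover: "\<Union>(set (levels g)) = UNIV"
proof (intro set_eqI iffI)
  fix v
  obtain i where "i < length (levels g)" "v \<in> levels g ! i" using level_index_ex by blast
  then show "v \<in> \<Union>(set (levels g))" using nth_mem by blast
qed simp

lemma levels_nonempty: "\<forall>i < length (levels g). levels g ! i \<noteq> {}"
proof (intro allI impI)
  fix i assume i: "i < length (levels g)"
  then have "i < length (sorted_list_of_set (range g))" by (simp add: levels_def)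
  then have "sorted_list_of_set (range g) ! i \<in> set (sorted_list_of_set (range g))"
    by (rule nth_mem)
  then have "sorted_list_of_set (range g) ! i \<in> range g" by simp
  then show "levels g ! i \<noteq> {}" using levels_member[OF i] by auto
qed

lemma levels_disjoint:
  "\<forall>i < length (levels g). \<forall>j < length (levels g). i \<noteq> j \<longrightarrow> levels g ! i \<inter> levels g ! j = {}"
proof (intro allI impI)
  fix i j assume i: "i < length (levels g)" and j: "j < length (levels g)" and "i \<noteq> j"
  then have "sorted_list_of_set (range g) ! i \<noteq> sorted_list_of_set (range g) ! j"
    by (simp add: levels_def nth_eq_iff_index_eq)
  then show "levels g ! i \<inter> levels g ! j = {}" using levels_member[OF i] levels_member[OF j] by auto
qed

text \<open>Truncating from below and from above at the same level are both monotone, so they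
  change in the same direction.\<close>
lemma min_max_compatible:
  fixes p q a :: real
  shows "0 \<le> (min p a - min q a) * (max p a - max q a)"
proof (cases "p \<le> q")
  case True
  then have "min p a - min q a \<le> 0" "max p a - max q a \<le> 0" by auto
  then show ?thesis by (rule mult_nonpos_nonpos)
next
  case False
  then have "0 \<le> min p a - min q a" "0 \<le> max p a - max q a" by auto
  then show ?thesis by (rule mult_nonneg_nonneg)
qed

section \<open>Orthogonal projection onto a subspace\<close>

definition orth_proj :: "'a::euclidean_space set \<Rightarrow> ('a \<Rightarrow> 'a) \<Rightarrow> bool" where
  "orth_proj K P \<longleftrightarrow> linear P \<and> (\<forall>x. P x \<in> K) \<and> (\<forall>x k. k \<in> K \<longrightarrow> (x - P x) \<bullet> k = 0)"

lemma orth_proj_exists: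
  fixes K :: "'a::euclidean_space set"
  assumes K: "subspace K"
  shows "\<exists>P. orth_proj K P"
proof -
  have decomp: "\<exists>y. y \<in> K \<and> (\<forall>k\<in>K. (x - y) \<bullet> k = 0)" for x
  proof -
    obtain y z where "y \<in> span K" "\<And>w. w \<in> span K \<Longrightarrow> orthogonal z w" "x = y + z"
      using orthogonal_subspace_decomp_exists[of K x] by blast
    moreover have "span K = K" using K by (simp add: span_eq_iff)
    ultimately show ?thesis by (intro exI[of _ y]) (auto simp: orthogonal_def)
  qed
  have unique: "y = y'" if "y \<in> K" "\<forall>k\<in>K. (x - y) \<bullet> k = 0" "y' \<in> K" "\<forall>k\<in>K. (x - y') \<bullet> k = 0"
    for x y y'
  proof -
    have "y' - y \<in> K" using that K subspace_diff by blast
    then have "(x - y) \<bullet> (y' - y) - (x - y') \<bullet> (y' - y) = 0" using that by simp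
    then have "(y' - y) \<bullet> (y' - y) = 0" by (simp add: inner_diff_left)
    then show ?thesis by simp
  qed
  define P where "P x = (SOME y. y \<in> K \<and> (\<forall>k\<in>K. (x - y) \<bullet> k = 0))" for x
  have P: "P x \<in> K \<and> (\<forall>k\<in>K. (x - P x) \<bullet> k = 0)" for x
    unfolding P_def by (rule someI_ex[OF decomp])
  have "linear P"
  proof (rule linearI)
    fix x y
    have "P x + P y \<in> K" using P K subspace_add by blast
    moreover have "\<forall>k\<in>K. (x + y - (P x + P y)) \<bullet> k = 0"
    proof
      fix k assume "k \<in> K"
      then have "(x - P x) \<bullet> k + (y - P y) \<bullet> k = 0" using P by simp
      then show "(x + y - (P x + P y)) \<bullet> k = 0" by (simp add: algebra_simps inner_diff_left)
    qed
    ultimately show "P (x + y) = P x + P y" using unique P by blast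
  next
    fix r x
    have "r *\<^sub>R P x \<in> K" using P K subspace_scale by blast
    moreover have "\<forall>k\<in>K. (r *\<^sub>R x - r *\<^sub>R P x) \<bullet> k = 0"
      using P by (simp flip: scaleR_right_diff_distrib)
    ultimately show "P (r *\<^sub>R x) = r *\<^sub>R P x" using unique P by blast
  qed
  then show ?thesis using P unfolding orth_proj_def by blast
qed

lemma orth_proj_inner:
  assumes "orth_proj K P" "k \<in> K"
  shows "k \<bullet> P y = k \<bullet> y"
proof -
  have "(y - P y) \<bullet> k = 0" using assms by (simp add: orth_proj_def)
  then have "k \<bullet> (y - P y) = 0" by (simp add: inner_commute)
  then show ?thesis by (simp add: inner_diff_right)
qed

section \<open>The cube and its faces\<close>

text \<open>The cube $[-1/2,1/2]^E$, the $\ell^1$-norm (its support function, up to the factor 2),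
  the sign pattern of a vector as a set of oriented edges, and the face of the cube
  on which the coordinates prescribed by a set of oriented edges are extremal.\<close>

definition cube :: "(real^'e::finite) set" where
  "cube = {y. \<forall>e. \<bar>y $ e\<bar> \<le> 1/2}"

definition l1norm :: "real^'e::finite \<Rightarrow> real" where
  "l1norm c = (\<Sum>e\<in>UNIV. \<bar>c $ e\<bar>)"

definition signs :: "real^'e::finite \<Rightarrow> ('e \<times> bool) set" where
  "signs c = {(e, b). if b then 0 < c $ e else c $ e < 0}"

definition cube_face :: "('e::finite \<times> bool) set \<Rightarrow> (real^'e) set" where
  "cube_face D = {y \<in> cube. \<forall>(e, b)\<in>D. y $ e = (if b then 1/2 else -1/2)}"

definition cube_vertex :: "real^'e::finite \<Rightarrow> real^'e" where
  "cube_vertex c = (\<chi> e. sgn (c $ e) / 2)"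

lemma l1norm_scale: "l1norm (t *\<^sub>R c) = \<bar>t\<bar> * l1norm c"
  by (simp add: l1norm_def abs_mult sum_distrib_left)

lemma l1norm_add_compatible:
  assumes "\<And>e. 0 \<le> c1 $ e * c2 $ e"
  shows "l1norm (c1 + c2) = l1norm c1 + l1norm c2"
proof -
  have "\<bar>c1 $ e + c2 $ e\<bar> = \<bar>c1 $ e\<bar> + \<bar>c2 $ e\<bar>" for e
    using assms[of e] by (cases "0 \<le> c1 $ e") (auto simp: zero_le_mult_iff)
  then show ?thesis by (simp add: l1norm_def sum.distrib)
qed

lemma l1norm_le_inner_self_integral:
  assumes "\<And>e. c $ e \<in> \<int>"
  shows "l1norm c \<le> c \<bullet> c"
proof -
  have "\<bar>c $ e\<bar> \<le> c $ e * c $ e" for e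
  proof -
    obtain z where z: "c $ e = of_int z" using assms[of e] Ints_cases by blast
    have "\<bar>z\<bar> \<le> z * z"
    proof (cases "z = 0")
      case False
      then have "\<bar>z\<bar> * 1 \<le> \<bar>z\<bar> * \<bar>z\<bar>" by (intro mult_left_mono) auto
      then show ?thesis by (simp add: abs_mult_self_eq)
    qed simp
    then show ?thesis unfolding z by (metis of_int_abs of_int_le_iff of_int_mult)
  qed
  then show ?thesis unfolding l1norm_def inner_vec_def by (intro sum_mono) simp
qed

lemma cube_eq_cbox: "cube = cbox (\<chi> e. -1/2) (\<chi> e. 1/2)"
proof -
  have "\<bar>t\<bar> \<le> 1/2 \<longleftrightarrow> (-1/2) \<le> t \<and> t \<le> 1/2" for t :: real by auto
  then show ?thesis
    unfolding cube_def set_eq_iff mem_Collect_eq mem_box_cart vec_lambda_beta by simp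
qed

lemma product_le_half_abs:
  fixes c y :: real
  assumes "\<bar>y\<bar> \<le> 1/2"
  shows "2 * (c * y) \<le> \<bar>c\<bar>"
proof -
  have "c * y \<le> \<bar>c\<bar> * \<bar>y\<bar>" by (metis abs_ge_self abs_mult)
  also have "\<dots> \<le> \<bar>c\<bar> * (1/2)" using assms by (intro mult_left_mono) auto
  finally show ?thesis by simp
qed

lemma cube_support_le:
  assumes "y \<in> cube"
  shows "2 * (c \<bullet> y) \<le> l1norm c"
proof -
  have "2 * (c $ e * y $ e) \<le> \<bar>c $ e\<bar>" for e
    using assms by (intro product_le_half_abs) (simp add: cube_def)
  then show ?thesis
    unfolding inner_vec_def l1norm_def sum_distrib_left by (intro sum_mono) simp
qed

lemma product_eq_half_abs:
  fixes c y :: real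
  assumes "\<bar>y\<bar> \<le> 1/2"
  shows "2 * (c * y) = \<bar>c\<bar> \<longleftrightarrow> (0 < c \<longrightarrow> y = 1/2) \<and> (c < 0 \<longrightarrow> y = -1/2)"
proof (cases c "0::real" rule: linorder_cases)
  case less
  then have "\<bar>c\<bar> - 2 * (c * y) = (- c) * (1 + 2 * y)" by (simp add: algebra_simps)
  then have "2 * (c * y) = \<bar>c\<bar> \<longleftrightarrow> (- c) * (1 + 2 * y) = 0" by linarith
  also have "\<dots> \<longleftrightarrow> y = -1/2" using less by auto
  finally show ?thesis using less by simp
next
  case greater
  then have "\<bar>c\<bar> - 2 * (c * y) = c * (1 - 2 * y)" by (simp add: algebra_simps)
  then have "2 * (c * y) = \<bar>c\<bar> \<longleftrightarrow> c * (1 - 2 * y) = 0" by linarith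
  also have "\<dots> \<longleftrightarrow> y = 1/2" using greater by auto
  finally show ?thesis using greater by simp
qed simp

lemma cube_face_signs: "cube_face (signs c) = {y \<in> cube. 2 * (c \<bullet> y) = l1norm c}"
proof (intro set_eqI iffI)
  fix y assume y: "y \<in> {y \<in> cube. 2 * (c \<bullet> y) = l1norm c}"
  then have y_e: "\<bar>y $ e\<bar> \<le> 1/2" for e by (auto simp: cube_def)
  have "l1norm c - 2 * (c \<bullet> y) = (\<Sum>e\<in>UNIV. \<bar>c $ e\<bar> - 2 * (c $ e * y $ e))"
    by (simp add: l1norm_def inner_vec_def sum_subtractf sum_distrib_left)
  then have "\<forall>e. \<bar>c $ e\<bar> - 2 * (c $ e * y $ e) = 0"
    using y sum_nonneg_eq_0_iff[of UNIV "\<lambda>e. \<bar>c $ e\<bar> - 2 * (c $ e * y $ e)"]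
      product_le_half_abs[OF y_e] by auto
  then have "2 * (c $ e * y $ e) = \<bar>c $ e\<bar>" for e by simp
  then have "(0 < c $ e \<longrightarrow> y $ e = 1/2) \<and> (c $ e < 0 \<longrightarrow> y $ e = -1/2)" for e
    using product_eq_half_abs[OF y_e[of e], of "c $ e"] by blast
  then show "y \<in> cube_face (signs c)"
    using y by (auto simp: cube_face_def signs_def)
next
  fix y assume y: "y \<in> cube_face (signs c)"
  then have "y \<in> cube" by (simp add: cube_face_def)
  then have y_e: "\<bar>y $ e\<bar> \<le> 1/2" for e by (auto simp: cube_def)
  have "(0 < c $ e \<longrightarrow> y $ e = 1/2) \<and> (c $ e < 0 \<longrightarrow> y $ e = -1/2)" for e
  proof -
    have "(e, True) \<in> signs c \<longleftrightarrow> 0 < c $ e" "(e, False) \<in> signs c \<longleftrightarrow> c $ e < 0"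
      by (simp_all add: signs_def)
    then show ?thesis using y unfolding cube_face_def by fastforce
  qed
  then have "2 * (c $ e * y $ e) = \<bar>c $ e\<bar>" for e
    using product_eq_half_abs[OF y_e[of e], of "c $ e"] by blast
  then have "2 * (c \<bullet> y) = l1norm c"
    by (simp add: l1norm_def inner_vec_def sum_distrib_left)
  then show "y \<in> {y \<in> cube. 2 * (c \<bullet> y) = l1norm c}" using \<open>y \<in> cube\<close> by simp
qed

lemma cube_face_antimono: "D2 \<subseteq> D1 \<Longrightarrow> cube_face D1 \<subseteq> cube_face D2"
  by (auto simp: cube_face_def)

lemma cube_vertex_in_cube: "cube_vertex c \<in> cube"
  by (auto simp: cube_vertex_def cube_def sgn_if)

lemma cube_vertex_coord:
  "cube_vertex c $ e = (if b then 1/2 else -1/2) \<longleftrightarrow> (e, b) \<in> signs c"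
  by (cases b) (auto simp: cube_vertex_def signs_def sgn_if)

text \<open>Hence it lies exactly on the faces prescribed by subsets of the sign pattern of c;
  it serves as a witness both for nonemptiness of faces and for comparing them.\<close>
lemma cube_vertex_in_face_iff: "cube_vertex c \<in> cube_face D \<longleftrightarrow> D \<subseteq> signs c"
  unfolding cube_face_def mem_Collect_eq cube_vertex_coord
  using cube_vertex_in_cube by auto

section \<open>Faces of a projected cube\<close>

context
  fixes K :: "(real^'e::finite) set" and P :: "real^'e \<Rightarrow> real^'e"
  assumes P: "orth_proj K P"
begin

lemma P_linear: "linear P"
  using P by (simp add: orth_proj_def)

text \<open>A functional from K sees the zonotope as it sees the cube.\<close>
lemma zonotope_support_le:
  assumes "c \<in> K" "x \<in> P ` cube"
  shows "2 * (c \<bullet> x) \<le> l1norm c"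
proof -
  obtain y where y: "y \<in> cube" "x = P y" using assms(2) by blast
  then have "c \<bullet> x = c \<bullet> y" using orth_proj_inner[OF P assms(1), of y] by simp
  then show ?thesis using cube_support_le[OF y(1), of c] by simp
qed

lemma zonotope_support_face:
  assumes "c \<in> K"
  shows "P ` cube \<inter> {x. 2 * (c \<bullet> x) = l1norm c} = P ` cube_face (signs c)"
  by (force simp: cube_face_signs orth_proj_inner[OF P assms])

lemma zonotope_convex: "convex (P ` cube)"
  unfolding cube_eq_cbox by (intro convex_linear_image P_linear convex_box)

lemma zonotope_compact: "compact (P ` cube)"
  unfolding cube_eq_cbox
  by (intro compact_continuous_image linear_continuous_on compact_cbox
      linear_conv_bounded_linear[THEN iffD1, OF P_linear])

lemma zonotope_polytope: "polytope (P ` cube)"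
  unfolding cube_eq_cbox by (intro polytope_linear_image P_linear polytope_interval)

lemma zonotope_face_nonempty:
  assumes c: "c \<in> K"
  shows "P ` cube_face (signs c) \<in> nonempty_faces (P ` cube)"
proof -
  have "P ` cube \<inter> {x. (2 *\<^sub>R c) \<bullet> x = l1norm c} face_of P ` cube"
    using zonotope_convex zonotope_support_le[OF c]
    by (intro face_of_Int_supporting_hyperplane_le) auto
  moreover have "P (cube_vertex c) \<in> P ` cube_face (signs c)"
    using cube_vertex_in_face_iff by blast
  ultimately show ?thesis
    using zonotope_support_face[OF c] by (auto simp: nonempty_faces_def)
qed

text \<open>Conversely every nonempty face is of this form: faces of polytopes are exposed, and
  an exposing functional may be replaced by its projection to K.\<close>
lemma zonotope_face_exhaust:
  assumes F: "F \<in> nonempty_faces (P ` cube)"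
  shows "\<exists>c\<in>K. F = P ` cube_face (signs c)"
proof -
  have "F exposed_face_of P ` cube"
    using F zonotope_polytope exposed_face_of_polyhedron polytope_imp_polyhedron
    by (auto simp: nonempty_faces_def)
  then obtain a b where below: "P ` cube \<subseteq> {x. a \<bullet> x \<le> b}"
    and F_eq: "F = P ` cube \<inter> {x. a \<bullet> x = b}"
    by (auto simp: exposed_face_of_def)
  define c where "c = P a"
  have c: "c \<in> K" using P by (simp add: c_def orth_proj_def)
  have a_c: "a \<bullet> x = c \<bullet> x" if "x \<in> P ` cube" for x
    using that orth_proj_inner[OF P, of x a] P by (auto simp: c_def orth_proj_def inner_commute)
  obtain x0 where x0: "x0 \<in> P ` cube" "a \<bullet> x0 = b"
    using F F_eq by (auto simp: nonempty_faces_def)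
  have "b \<le> l1norm c / 2"
    using zonotope_support_le[OF c x0(1)] a_c[OF x0(1)] x0(2) by simp
  moreover have "P (cube_vertex c) \<in> P ` cube_face (signs c)"
    using cube_vertex_in_face_iff[of c "signs c"] by blast
  then have "P (cube_vertex c) \<in> P ` cube" "2 * (c \<bullet> P (cube_vertex c)) = l1norm c"
    unfolding zonotope_support_face[OF c, symmetric] by auto
  then have "l1norm c / 2 \<le> b"
    using below a_c by fastforce
  ultimately have "F = P ` cube \<inter> {x. 2 * (c \<bullet> x) = l1norm c}"
    using F_eq a_c by auto
  then show ?thesis using zonotope_support_face[OF c] c by blast
qed

lemma zonotope_face_order:
  assumes c1: "c1 \<in> K" and c2: "c2 \<in> K"
  shows "P ` cube_face (signs c1) \<subseteq> P ` cube_face (signs c2) \<longleftrightarrow> signs c2 \<subseteq> signs c1"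
proof
  assume sub: "P ` cube_face (signs c1) \<subseteq> P ` cube_face (signs c2)"
  have "P (cube_vertex c1) \<in> P ` cube_face (signs c1)"
    using cube_vertex_in_face_iff[of c1 "signs c1"] by blast
  then have "P (cube_vertex c1) \<in> P ` cube \<inter> {x. 2 * (c2 \<bullet> x) = l1norm c2}"
    using sub unfolding zonotope_support_face[OF c2] by blast
  then have "2 * (c2 \<bullet> cube_vertex c1) = l1norm c2"
    using orth_proj_inner[OF P c2, of "cube_vertex c1"] by simp
  then have "cube_vertex c1 \<in> cube_face (signs c2)"
    unfolding cube_face_signs using cube_vertex_in_cube by blast
  then show "signs c2 \<subseteq> signs c1"
    using cube_vertex_in_face_iff by blast
qed (use cube_face_antimono in blast)

end

section \<open>The Voronoi cell of the lattice of integer cuts\<close>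

context
  fixes hed tal :: "'e::finite \<Rightarrow> 'v::finite"
begin

lemma cobound_nth [simp]: "cobound hed tal f $ e = f (hed e) - f (tal e)"
  by (simp add: cobound_def)

lemma cobound_in_cut_space: "cobound hed tal f \<in> cut_space hed tal"
  by (auto simp: cut_space_def)

lemma cut_space_subspace: "subspace (cut_space hed tal)"
  unfolding subspace_def cut_space_def
proof (intro conjI allI impI ballI)
  show "0 \<in> {cobound hed tal f |f. True}"
    by (rule CollectI, rule exI[of _ "\<lambda>_. 0"]) (simp add: vec_eq_iff)
next
  fix x y assume "x \<in> {cobound hed tal f |f. True}" "y \<in> {cobound hed tal f |f. True}"
  then obtain f g where "x = cobound hed tal f" "y = cobound hed tal g" by auto
  then show "x + y \<in> {cobound hed tal f |f. True}"
    by (intro CollectI exI[of _ "\<lambda>v. f v + g v"]) (simp add: vec_eq_iff)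
next
  fix t x assume "x \<in> {cobound hed tal f |f. True}"
  then obtain f where x: "x = cobound hed tal f" by auto
  show "t *\<^sub>R x \<in> {cobound hed tal f |f. True}"
    unfolding x by (intro CollectI exI[of _ "\<lambda>v. t * f v"]) (simp add: vec_eq_iff right_diff_distrib)
qed

lemma voronoi_ineq:
  assumes "x \<in> voronoi_cell hed tal 0" "\<mu> \<in> integer_cuts hed tal"
  shows "2 * (\<mu> \<bullet> x) \<le> \<mu> \<bullet> \<mu>"
proof -
  have "x \<bullet> x \<le> (x - \<mu>) \<bullet> (x - \<mu>)"
    using assms by (simp add: voronoi_cell_def qf_def inner_vec_def power2_eq_square)
  then show ?thesis by (simp add: inner_diff_left inner_diff_right inner_commute)
qed

text \<open>The zonotope lies in the Voronoi cell: against a lattice point mu, a projected point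
  P y of the cube satisfies 2 (mu . P y) = 2 (mu . y) <= |mu|_1 <= mu . mu.\<close>
lemma zonotope_subset_voronoi:
  assumes P: "orth_proj (cut_space hed tal) P"
  shows "P ` cube \<subseteq> voronoi_cell hed tal 0"
proof
  fix x assume "x \<in> P ` cube"
  then obtain y where y: "y \<in> cube" "x = P y" by blast
  have "qf x \<le> qf (x - \<mu>)" if \<mu>_L: "\<mu> \<in> integer_cuts hed tal" for \<mu>
  proof -
    obtain f where \<mu>: "\<mu> = cobound hed tal (\<lambda>v. real_of_int (f v))"
      using \<mu>_L unfolding integer_cuts_def by blast
    have "\<mu> \<bullet> x = \<mu> \<bullet> y"
      using orth_proj_inner[OF P] cobound_in_cut_space y(2) \<mu> by simp
    also have "2 * \<dots> \<le> l1norm \<mu>" using cube_support_le[OF y(1)] .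
    also have "\<dots> \<le> \<mu> \<bullet> \<mu>" by (rule l1norm_le_inner_self_integral) (simp add: \<mu>)
    finally show ?thesis
      by (simp add: qf_def inner_vec_def power2_eq_square algebra_simps sum_subtractf
          sum.distrib sum_distrib_left)
  qed
  moreover have "x \<in> cut_space hed tal" using P y(2) by (simp add: orth_proj_def)
  ultimately show "x \<in> voronoi_cell hed tal 0" by (simp add: voronoi_cell_def)
qed

text \<open>Testing the Voronoi inequality against the cut of a vertex set S gives the bound for
  indicator potentials; their coboundaries have entries in $\{-1,0,1\}$.\<close>
lemma indicator_cut_bound:
  fixes S :: "'v set"
  assumes x: "x \<in> voronoi_cell hed tal 0"
  defines "\<mu> \<equiv> cobound hed tal (\<lambda>v. if v \<in> S then 1 else 0)"
  shows "2 * (\<mu> \<bullet> x) \<le> l1norm \<mu>"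
proof -
  have "\<mu> \<in> integer_cuts hed tal"
    unfolding integer_cuts_def \<mu>_def
    by (rule CollectI, rule exI[of _ "\<lambda>v. if v \<in> S then 1 else 0"]) (simp add: vec_eq_iff)
  then have "2 * (\<mu> \<bullet> x) \<le> \<mu> \<bullet> \<mu>" by (rule voronoi_ineq[OF x])
  also have "\<mu> \<bullet> \<mu> = l1norm \<mu>"
    unfolding inner_vec_def l1norm_def by (rule sum.cong) (auto simp: \<mu>_def)
  finally show ?thesis .
qed

text \<open>Peeling off the lowest level of a non-constant potential g: with m < a its two
  smallest values, g = min(g,a) + (max(g,a) - a), where min(g,a) is m plus (a - m) times the
  indicator of S = {g \<noteq> m} and h = max(g,a) - a takes fewer values than g, since it merges
  m and a. Both parts are monotone in g, so their coboundaries have compatible signs.\<close>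
lemma peel_lowest_level:
  fixes g :: "'v \<Rightarrow> real"
  assumes nonconst: "\<not> (\<exists>c. \<forall>v. g v = c)"
  obtains t S h where "0 \<le> t" "card (range h) < card (range g)"
    "cobound hed tal g = t *\<^sub>R cobound hed tal (\<lambda>v. if v \<in> S then 1 else 0) + cobound hed tal h"
    "\<And>e. 0 \<le> (t *\<^sub>R cobound hed tal (\<lambda>v. if v \<in> S then 1 else 0)) $ e * cobound hed tal h $ e"
proof -
  define m where "m = Min (range g)"
  have m: "m \<in> range g" "\<And>v. m \<le> g v" unfolding m_def by auto
  define a where "a = Min (range g - {m})"
  have "range g - {m} \<noteq> {}" using nonconst by auto
  then have "a \<in> range g - {m}" unfolding a_def by (intro Min_in) auto
  moreover have "a \<le> g v" if "g v \<noteq> m" for v unfolding a_def using that by (intro Min_le) auto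
  ultimately have a: "a \<in> range g" "a \<noteq> m" "\<And>v. g v \<noteq> m \<Longrightarrow> a \<le> g v" by auto
  have m_less_a: "m < a" using a(1,2) m(2) by (metis image_iff order_le_less)
  define S where "S = {v. g v \<noteq> m}"
  define h where "h v = max (g v) a - a" for v
  have "min (g v) a = m + (a - m) * (if v \<in> S then 1 else 0)" for v
    using a(3)[of v] m_less_a by (auto simp: S_def)
  then have low: "cobound hed tal (\<lambda>v. min (g v) a) =
      (a - m) *\<^sub>R cobound hed tal (\<lambda>v. if v \<in> S then 1 else 0)"
    by (simp add: vec_eq_iff algebra_simps)
  show thesis
  proof (rule that[of "a - m" h S])
    show "0 \<le> a - m" using m_less_a by simp
    show "card (range h) < card (range g)"
      unfolding h_def image_image[of "\<lambda>t. max t a - a" g, symmetric]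
      using m a by (intro card_image_less_if_collapse[of _ m a]) auto
    show "cobound hed tal g = (a - m) *\<^sub>R cobound hed tal (\<lambda>v. if v \<in> S then 1 else 0) + cobound hed tal h"
      unfolding low[symmetric] by (auto simp: vec_eq_iff h_def min_def max_def)
    show "0 \<le> ((a - m) *\<^sub>R cobound hed tal (\<lambda>v. if v \<in> S then 1 else 0)) $ e * cobound hed tal h $ e" for e
      unfolding low[symmetric] using min_max_compatible[of "g (hed e)" a "g (tal e)"]
      by (simp add: h_def)
  qed
qed

text \<open>The key inequality: every point x of the Voronoi cell satisfies
  2 (d(g) . x) <= |d(g)|_1 for all real potentials g, by induction on the number of values
  of g, peeling off the lowest level and using the bound for cuts of vertex sets.\<close>
lemma cut_bound:
  assumes x: "x \<in> voronoi_cell hed tal 0"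
  shows "2 * (cobound hed tal g \<bullet> x) \<le> l1norm (cobound hed tal g)"
proof (induction "card (range g)" arbitrary: g rule: less_induct)
  case less
  show ?case
  proof (cases "\<exists>c. \<forall>v. g v = c")
    case True
    then have "cobound hed tal g = 0" by (auto simp: vec_eq_iff)
    then show ?thesis by (simp add: l1norm_def)
  next
    case False
    then obtain t S h where t: "0 \<le> t" and fewer: "card (range h) < card (range g)"
      and split: "cobound hed tal g = t *\<^sub>R cobound hed tal (\<lambda>v. if v \<in> S then 1 else 0) + cobound hed tal h"
      and compatible: "\<And>e. 0 \<le> (t *\<^sub>R cobound hed tal (\<lambda>v. if v \<in> S then 1 else 0)) $ e * cobound hed tal h $ e"
      by (rule peel_lowest_level) blast
    have "2 * ((t *\<^sub>R cobound hed tal (\<lambda>v. if v \<in> S then 1 else 0)) \<bullet> x)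
        \<le> l1norm (t *\<^sub>R cobound hed tal (\<lambda>v. if v \<in> S then 1 else 0))"
      using mult_left_mono[OF indicator_cut_bound[OF x, of S] t] t
      by (simp add: l1norm_scale algebra_simps)
    moreover have "2 * (cobound hed tal h \<bullet> x) \<le> l1norm (cobound hed tal h)"
      using less fewer by blast
    ultimately show ?thesis
      unfolding split l1norm_add_compatible[OF compatible] by (simp add: inner_add_left)
  qed
qed

text \<open>Conversely the Voronoi cell lies in the zonotope: a point outside would be separated
  from it by a hyperplane whose normal may be taken in the cut space, i.e. a coboundary,
  contradicting the key inequality.\<close>
lemma voronoi_subset_zonotope:
  assumes P: "orth_proj (cut_space hed tal) P"
  shows "voronoi_cell hed tal 0 \<subseteq> P ` cube"
proof
  fix x assume x: "x \<in> voronoi_cell hed tal 0"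
  show "x \<in> P ` cube"
  proof (rule ccontr)
    assume "x \<notin> P ` cube"
    then obtain a b where ab: "a \<bullet> x < b" "\<forall>z\<in>P ` cube. b < a \<bullet> z"
      using separating_hyperplane_closed_point[OF zonotope_convex[OF P]
          compact_imp_closed[OF zonotope_compact[OF P]]] by blast
    define c where "c = - P a"
    have "c \<in> cut_space hed tal"
      using P cut_space_subspace subspace_neg by (auto simp: c_def orth_proj_def)
    then obtain g where g: "c = cobound hed tal g" by (auto simp: cut_space_def)
    have a_c: "a \<bullet> z = - (c \<bullet> z)" if "z \<in> cut_space hed tal" for z
      using orth_proj_inner[OF P that, of a] by (simp add: c_def inner_commute)
    have "x \<in> cut_space hed tal" using x by (simp add: voronoi_cell_def)
    then have "2 * (c \<bullet> x) > - 2 * b" using ab(1) a_c by simp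
    moreover have "P (cube_vertex c) \<in> P ` cube_face (signs c)"
      using cube_vertex_in_face_iff[of c "signs c"] by blast
    then have "2 * (c \<bullet> P (cube_vertex c)) = l1norm c" "P (cube_vertex c) \<in> P ` cube"
      using zonotope_support_face[OF P \<open>c \<in> cut_space hed tal\<close>] by blast+
    then have "l1norm c < - 2 * b"
      using ab(2) a_c P by (fastforce simp: orth_proj_def)
    ultimately show False using cut_bound[OF x, of g] g by simp
  qed
qed

lemma voronoi_eq_zonotope:
  assumes "orth_proj (cut_space hed tal) P"
  shows "voronoi_cell hed tal 0 = P ` cube"
  using voronoi_subset_zonotope[OF assms] zonotope_subset_voronoi[OF assms] by blast

end

section \<open>Coherent acyclic orientations are the sign patterns of cuts\<close>

context
  fixes hed tal :: "'e::finite \<Rightarrow> 'v::finite"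
begin

definition ascent :: "('v \<Rightarrow> real) \<Rightarrow> ('e \<times> bool) set" where
  "ascent g = {oe. g (oe_tail hed tal oe) < g (oe_head hed tal oe)}"

lemma signs_cobound: "signs (cobound hed tal g) = ascent g"
  by (auto simp: signs_def ascent_def oe_tail_def oe_head_def split: if_splits)

text \<open>An ordered partition yields the potential "index of the part".\<close>
lemma coherent_acyclic_imp_ascent:
  assumes "coherent_acyclic hed tal D"
  shows "\<exists>g. D = ascent g"
proof -
  obtain Ps :: "'v set list" where
      disjoint: "\<forall>i<length Ps. \<forall>j<length Ps. i \<noteq> j \<longrightarrow> Ps ! i \<inter> Ps ! j = {}"
    and cover: "\<Union>(set Ps) = UNIV"
    and D: "D = {oe. \<exists>i j. i < j \<and> j < length Ps \<and> oe_tail hed tal oe \<in> Ps ! i \<and> oe_head hed tal oe \<in> Ps ! j}"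
    using assms unfolding coherent_acyclic_def by blast
  have part_ex: "\<exists>i. i < length Ps \<and> v \<in> Ps ! i" for v
    using cover by (metis UNIV_I Union_iff in_set_conv_nth)
  define part where "part v = (THE i. i < length Ps \<and> v \<in> Ps ! i)" for v
  have part: "part v < length Ps \<and> v \<in> Ps ! part v" for v
    unfolding part_def by (rule theI') (use part_ex disjoint in blast)
  have part_eq: "part v = i" if "i < length Ps" "v \<in> Ps ! i" for i v
    using part[of v] disjoint that by blast
  have "D = ascent (\<lambda>v. real (part v))"
  proof (intro set_eqI iffI)
    fix oe assume "oe \<in> D"
    then obtain i j where "i < j" "j < length Ps"
      "oe_tail hed tal oe \<in> Ps ! i" "oe_head hed tal oe \<in> Ps ! j"
      unfolding D by blast
    then have "part (oe_tail hed tal oe) < part (oe_head hed tal oe)"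
      using part_eq[of i "oe_tail hed tal oe"] part_eq[of j "oe_head hed tal oe"] by simp
    then show "oe \<in> ascent (\<lambda>v. real (part v))" by (simp add: ascent_def)
  next
    fix oe assume "oe \<in> ascent (\<lambda>v. real (part v))"
    then show "oe \<in> D" unfolding D ascent_def using part by auto
  qed
  then show ?thesis by blast
qed

text \<open>Conversely the level sets of a potential, listed by increasing value, form an ordered
  partition realizing its ascent set.\<close>
lemma ascent_coherent_acyclic: "coherent_acyclic hed tal (ascent g)"
proof -
  let ?L = "levels g"
  have ascent: "ascent g =
      {oe. \<exists>i j. i < j \<and> j < length ?L \<and> oe_tail hed tal oe \<in> ?L ! i \<and> oe_head hed tal oe \<in> ?L ! j}"
  proof (intro set_eqI iffI)
    fix oe assume up: "oe \<in> ascent g"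
    obtain i where i: "i < length ?L" "oe_tail hed tal oe \<in> ?L ! i" using level_index_ex by blast
    obtain j where j: "j < length ?L" "oe_head hed tal oe \<in> ?L ! j" using level_index_ex by blast
    note ij = i(1) j(1) i(2) j(2)
    moreover have "i < j" using up levels_order[OF ij] by (simp add: ascent_def)
    ultimately show "oe \<in> {oe. \<exists>i j. i < j \<and> j < length ?L \<and>
        oe_tail hed tal oe \<in> ?L ! i \<and> oe_head hed tal oe \<in> ?L ! j}" by blast
  next
    fix oe assume "oe \<in> {oe. \<exists>i j. i < j \<and> j < length ?L \<and>
        oe_tail hed tal oe \<in> ?L ! i \<and> oe_head hed tal oe \<in> ?L ! j}"
    then obtain i j where "i < j" and ij: "i < length ?L" "j < length ?L"
      "oe_tail hed tal oe \<in> ?L ! i" "oe_head hed tal oe \<in> ?L ! j" by auto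
    then show "oe \<in> ascent g" using levels_order[OF ij] by (simp add: ascent_def)
  qed
  show ?thesis
    unfolding coherent_acyclic_def
    by (intro exI[of _ ?L] conjI levels_not_Nil levels_nonempty levels_disjoint levels_cover ascent)
qed

lemma CAC_eq_signs: "CAC hed tal = signs ` cut_space hed tal"
proof -
  have "CAC hed tal = range ascent"
    using coherent_acyclic_imp_ascent ascent_coherent_acyclic by (auto simp: CAC_def)
  also have "\<dots> = signs ` range (cobound hed tal)"
    by (simp add: image_image signs_cobound)
  also have "range (cobound hed tal) = cut_space hed tal"
    by (auto simp: cut_space_def)
  finally show ?thesis .
qed

end

theorem mainTheorem12:
  fixes hed tal :: "'e::finite \<Rightarrow> 'v::finite"
  assumes "graph_connected hed tal"
  shows "\<exists>\<phi>. bij_betw \<phi> (nonempty_faces (voronoi_cell hed tal 0)) (CAC hed tal) \<and>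
           (\<forall>F1\<in>nonempty_faces (voronoi_cell hed tal 0). \<forall>F2\<in>nonempty_faces (voronoi_cell hed tal 0).
              F1 \<subseteq> F2 \<longleftrightarrow> cac_le (\<phi> F1) (\<phi> F2))"
proof -
  obtain P where P: "orth_proj (cut_space hed tal) P"
    using orth_proj_exists[OF cut_space_subspace] by blast
  have faces: "(\<lambda>D. P ` cube_face D) ` CAC hed tal = nonempty_faces (voronoi_cell hed tal 0)"
    unfolding CAC_eq_signs voronoi_eq_zonotope[OF P]
    using zonotope_face_nonempty[OF P] zonotope_face_exhaust[OF P] by blast
  have order: "P ` cube_face D1 \<subseteq> P ` cube_face D2 \<longleftrightarrow> D2 \<subseteq> D1"
    if "D1 \<in> CAC hed tal" "D2 \<in> CAC hed tal" for D1 D2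
    using that zonotope_face_order[OF P] unfolding CAC_eq_signs by blast
  show ?thesis
    using inclusion_reversing_inverse[OF faces order] unfolding cac_le_def by blast
qed

end
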